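(* Let $X$ be a set. (i) For every log-scale $\ell$ on $X$ there exists a metric on $X$ associated with $\ell$. (ii) If $|x-y|$ is a metric on $X$, then the function $\ell(x,y)=-\lfloor \ln|x-y|\rfloor$ (with $\ell(x,x)=+\infty$) is a log-scale on $X$, and the metric $|\cdot|$ is associated with it.
   Context: A log-scale on a set $X$ is a function $\ell:X\times X\to\mathbb{R}\cup\{\infty\}$ such that (1) $\ell(x,y)=\ell(y,x)$ for all $x,y$; (2) $\ell(x,y)=+\infty$ if and only if $x=y$; (3) there is $\delta\ge 0$ with $\ell(x,z)\ge\min(\ell(x,y),\ell(y,z))-\delta$ for all $x,y,z\in X$. A metric $|\cdot|$ on $X$ is associated with the log-scale $\ell$ if there are constants $0<\alpha<1$ and $c>1$ such that $c^{-1}\alpha^{\ell(x,y)}\le|x-y|\le c\,\alpha^{\ell(x,y)}$ for all $x,y\in X$. *)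

theory Defs
  imports "HOL-Analysis.Analysis"
begin

definition metric_on :: "'a set \<Rightarrow> ('a \<Rightarrow> 'a \<Rightarrow> real) \<Rightarrow> bool" where
  "metric_on X d \<longleftrightarrow>
     (\<forall>x\<in>X. \<forall>y\<in>X. 0 \<le> d x y) \<and>
     (\<forall>x\<in>X. \<forall>y\<in>X. d x y = 0 \<longleftrightarrow> x = y) \<and>
     (\<forall>x\<in>X. \<forall>y\<in>X. d x y = d y x) \<and>
     (\<forall>x\<in>X. \<forall>y\<in>X. \<forall>z\<in>X. d x z \<le> d x y + d y z)"

text \<open>Log-scale: values in R \<union> {+\<infinity>}, represented in ereal with -\<infinity> excluded.\<close>
definition log_scale :: "'a set \<Rightarrow> ('a \<Rightarrow> 'a \<Rightarrow> ereal) \<Rightarrow> bool" where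
  "log_scale X l \<longleftrightarrow>
     (\<forall>x\<in>X. \<forall>y\<in>X. l x y \<noteq> -\<infinity>) \<and>
     (\<forall>x\<in>X. \<forall>y\<in>X. l x y = l y x) \<and>
     (\<forall>x\<in>X. \<forall>y\<in>X. l x y = \<infinity> \<longleftrightarrow> x = y) \<and>
     (\<exists>\<delta>::real. \<delta> \<ge> 0 \<and>
        (\<forall>x\<in>X. \<forall>y\<in>X. \<forall>z\<in>X. l x z \<ge> min (l x y) (l y z) - ereal \<delta>))"

text \<open>alpha to the power of an element of R \<union> {+\<infinity>}, with alpha^(+\<infinity>) = 0 (for 0 < alpha < 1).
  The value at -\<infinity> is irrelevant (log-scales never take it).\<close>
definition epow :: "real \<Rightarrow> ereal \<Rightarrow> real" where
  "epow \<alpha> e = (case e of ereal r \<Rightarrow> \<alpha> powr r | PInfty \<Rightarrow> 0 | MInfty \<Rightarrow> 0)"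

definition associated :: "'a set \<Rightarrow> ('a \<Rightarrow> 'a \<Rightarrow> real) \<Rightarrow> ('a \<Rightarrow> 'a \<Rightarrow> ereal) \<Rightarrow> bool" where
  "associated X d l \<longleftrightarrow>
     (\<exists>\<alpha> c::real. 0 < \<alpha> \<and> \<alpha> < 1 \<and> c > 1 \<and>
        (\<forall>x\<in>X. \<forall>y\<in>X. epow \<alpha> (l x y) / c \<le> d x y \<and> d x y \<le> c * epow \<alpha> (l x y)))"

end

theory Submission imports Defs begin

text \<open>
  (i) If the log-scale l satisfies its ultrametric inequality up to the defect \<delta>, then
  r = \<alpha>^l is a quasi-ultrametric, r x z \<le> K * max (r x y) (r y z) with K = \<alpha>^(-\<delta>),
  and taking \<alpha> close enough to 1 gives K^2 \<le> 2. Frink's chain argument then shows that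
  the infimum of the r-lengths of finite chains from x to y is a metric lying between
  r x y / 2 and r x y.
  (ii) The triangle inequality gives |x - z| \<le> 2 * max |x - y| |y - z|, and ln 2 \<le> 1 turns
  this into the log-scale inequality with \<delta> = 1; association holds with \<alpha> = e^(-1)
  because e^\<lfloor>t\<rfloor> \<le> e^t \<le> e * e^\<lfloor>t\<rfloor>.
\<close>

lemma sum_split_at_halves:
  fixes a :: "nat \<Rightarrow> real"
  assumes "0 < n" and nonneg: "\<And>i. i < n \<Longrightarrow> 0 \<le> a i"
  obtains m where "m < n" "(\<Sum>i<m. a i) \<le> (\<Sum>i<n. a i) / 2"
    "(\<Sum>i\<in>{Suc m..<n}. a i) \<le> (\<Sum>i<n. a i) / 2"
proof -
  define S where "S = (\<Sum>i<n. a i)"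
  have "0 \<le> S" unfolding S_def using nonneg by (intro sum_nonneg) auto
  define M where "M = {m. m < n \<and> (\<Sum>i<m. a i) \<le> S / 2}"
  have "finite M" "0 \<in> M" unfolding M_def using \<open>0 < n\<close> \<open>0 \<le> S\<close> by auto
  define m where "m = Max M"
  have "m \<in> M" unfolding m_def using \<open>finite M\<close> \<open>0 \<in> M\<close> by (intro Max_in) auto
  then have "m < n" and head: "(\<Sum>i<m. a i) \<le> S / 2" unfolding M_def by auto
  have split: "S = (\<Sum>i<Suc m. a i) + (\<Sum>i\<in>{Suc m..<n}. a i)"
    unfolding S_def using \<open>m < n\<close>
    by (metis Suc_leI lessThan_atLeast0 sum.atLeastLessThan_concat zero_le)
  have "(\<Sum>i\<in>{Suc m..<n}. a i) \<le> S / 2"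
  proof (cases "Suc m < n")
    case True
    have "Suc m \<notin> M" using Max_ge[OF \<open>finite M\<close>, of "Suc m"] unfolding m_def by auto
    then have "S / 2 < (\<Sum>i<Suc m. a i)" using True unfolding M_def by auto
    then show ?thesis using split by linarith
  next
    case False
    then show ?thesis using \<open>0 \<le> S\<close> by simp
  qed
  then show thesis using that \<open>m < n\<close> head unfolding S_def by blast
qed

text \<open>Frink's lemma: the hypothesis K^2 \<le> 2 is what lets the induction close, after
  splitting the chain at the step where its length passes the half.\<close>

lemma quasi_ultrametric_chain_bound:
  fixes r :: "'a \<Rightarrow> 'a \<Rightarrow> real" and K :: real
  assumes nonneg: "\<And>x y. x \<in> X \<Longrightarrow> y \<in> X \<Longrightarrow> 0 \<le> r x y"
    and refl: "\<And>x. x \<in> X \<Longrightarrow> r x x = 0"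
    and quasi: "\<And>x y z. x \<in> X \<Longrightarrow> y \<in> X \<Longrightarrow> z \<in> X \<Longrightarrow> r x z \<le> K * max (r x y) (r y z)"
    and "1 \<le> K" "K * K \<le> 2"
  shows "(\<And>i. i \<le> n \<Longrightarrow> p i \<in> X) \<Longrightarrow> r (p 0) (p n) \<le> 2 * (\<Sum>i<n. r (p i) (p (Suc i)))"
proof (induction n arbitrary: p rule: less_induct)
  case (less n)
  show ?case
  proof (cases "n = 0")
    case True
    then show ?thesis using less.prems refl by simp
  next
    case False
    define a where "a i = r (p i) (p (Suc i))" for i
    define S where "S = (\<Sum>i<n. a i)"
    have a_nonneg: "0 \<le> a i" if "i < n" for i
      using nonneg less.prems that unfolding a_def by simp
    then have "0 \<le> S" unfolding S_def by (intro sum_nonneg) auto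
    obtain m where "m < n" and head: "(\<Sum>i<m. a i) \<le> S / 2"
      and tail: "(\<Sum>i\<in>{Suc m..<n}. a i) \<le> S / 2"
      using sum_split_at_halves[of n a] False a_nonneg unfolding S_def by auto
    have in_X: "p 0 \<in> X" "p m \<in> X" "p (Suc m) \<in> X" "p n \<in> X"
      using less.prems \<open>m < n\<close> by auto
    have A: "r (p 0) (p m) \<le> S"
      using less.IH[OF \<open>m < n\<close>, of p] less.prems \<open>m < n\<close> head unfolding a_def by auto
    have "(\<Sum>i\<in>{Suc m..<n}. a i) = (\<Sum>i<n - Suc m. a (i + Suc m))"
      using \<open>m < n\<close> sum.shift_bounds_nat_ivl[of a 0 "Suc m" "n - Suc m"]
      by (simp add: lessThan_atLeast0)
    then have B: "r (p (Suc m)) (p n) \<le> S"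
      using less.IH[of "n - Suc m" "\<lambda>i. p (i + Suc m)"] less.prems \<open>m < n\<close> tail
      unfolding a_def by auto
    have "a m \<le> S" unfolding S_def using \<open>m < n\<close> a_nonneg by (intro member_le_sum) auto
    have "r (p m) (p n) \<le> K * max (r (p m) (p (Suc m))) (r (p (Suc m)) (p n))"
      using quasi in_X by blast
    also have "\<dots> \<le> K * S" using \<open>a m \<le> S\<close> B \<open>1 \<le> K\<close> unfolding a_def by simp
    finally have C: "r (p m) (p n) \<le> K * S" .
    have "r (p 0) (p n) \<le> K * max (r (p 0) (p m)) (r (p m) (p n))"
      using quasi in_X by blast
    also have "\<dots> \<le> K * (K * S)"
      using A C \<open>1 \<le> K\<close> mult_right_mono[OF \<open>1 \<le> K\<close> \<open>0 \<le> S\<close>] by (intro mult_left_mono) auto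
    also have "\<dots> \<le> 2 * S"
      using \<open>K * K \<le> 2\<close> \<open>0 \<le> S\<close> by (simp add: mult.assoc[symmetric] mult_right_mono)
    finally show ?thesis unfolding S_def a_def .
  qed
qed

definition chain_lengths :: "'a set \<Rightarrow> ('a \<Rightarrow> 'a \<Rightarrow> real) \<Rightarrow> 'a \<Rightarrow> 'a \<Rightarrow> real set" where
  "chain_lengths X r x y =
     {(\<Sum>i<n. r (p i) (p (Suc i))) | p n. p 0 = x \<and> p n = y \<and> (\<forall>i\<le>n. p i \<in> X)}"

definition chain_dist :: "'a set \<Rightarrow> ('a \<Rightarrow> 'a \<Rightarrow> real) \<Rightarrow> 'a \<Rightarrow> 'a \<Rightarrow> real" where
  "chain_dist X r x y = Inf (chain_lengths X r x y)"

lemma chain_lengths_single_step: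
  assumes "x \<in> X" "y \<in> X"
  shows "r x y \<in> chain_lengths X r x y"
proof -
  define p where "p i = (if i = 0 then x else y)" for i :: nat
  have "r x y = (\<Sum>i<1. r (p i) (p (Suc i)))" "p 0 = x" "p 1 = y" "\<forall>i\<le>1. p i \<in> X"
    using assms unfolding p_def by auto
  then show ?thesis unfolding chain_lengths_def by blast
qed

lemma chain_lengths_nonneg:
  assumes "\<And>x y. x \<in> X \<Longrightarrow> y \<in> X \<Longrightarrow> 0 \<le> r x y" and "s \<in> chain_lengths X r x y"
  shows "0 \<le> s"
  using assms unfolding chain_lengths_def by (auto intro!: sum_nonneg)

lemma chain_lengths_reverse:
  assumes sym: "\<And>x y. x \<in> X \<Longrightarrow> y \<in> X \<Longrightarrow> r x y = r y x"
    and "s \<in> chain_lengths X r x y"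
  shows "s \<in> chain_lengths X r y x"
proof -
  obtain p n where s: "s = (\<Sum>i<n. r (p i) (p (Suc i)))" "p 0 = x" "p n = y" "\<forall>i\<le>n. p i \<in> X"
    using assms(2) unfolding chain_lengths_def by blast
  define q where "q i = p (n - i)" for i
  have "(\<Sum>i<n. r (q i) (q (Suc i))) = (\<Sum>i<n. r (p (Suc (n - Suc i))) (p (n - Suc i)))"
    unfolding q_def by (intro sum.cong refl) (simp add: Suc_diff_Suc)
  also have "\<dots> = (\<Sum>i<n. r (p (n - Suc i)) (p (Suc (n - Suc i))))"
    using s(4) sym by (intro sum.cong refl) auto
  also have "\<dots> = s" unfolding s(1) by (rule sum.nat_diff_reindex)
  finally have "s = (\<Sum>i<n. r (q i) (q (Suc i)))" by simp
  moreover have "q 0 = y" "q n = x" "\<forall>i\<le>n. q i \<in> X" using s unfolding q_def by auto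
  ultimately show ?thesis unfolding chain_lengths_def by blast
qed

lemma chain_lengths_append:
  assumes "s \<in> chain_lengths X r x y" "t \<in> chain_lengths X r y z"
  shows "s + t \<in> chain_lengths X r x z"
proof -
  obtain p n where s: "s = (\<Sum>i<n. r (p i) (p (Suc i)))" "p 0 = x" "p n = y" "\<forall>i\<le>n. p i \<in> X"
    using assms(1) unfolding chain_lengths_def by blast
  obtain q k where t: "t = (\<Sum>i<k. r (q i) (q (Suc i)))" "q 0 = y" "q k = z" "\<forall>i\<le>k. q i \<in> X"
    using assms(2) unfolding chain_lengths_def by blast
  define c where "c i = (if i \<le> n then p i else q (i - n))" for i
  have "(\<Sum>i<n + k. r (c i) (c (Suc i)))
      = (\<Sum>i\<in>{0..<n}. r (c i) (c (Suc i))) + (\<Sum>i\<in>{0+n..<k+n}. r (c i) (c (Suc i)))"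
    by (simp add: lessThan_atLeast0 sum.atLeastLessThan_concat add.commute)
  also have "(\<Sum>i\<in>{0..<n}. r (c i) (c (Suc i))) = s"
    unfolding s(1) lessThan_atLeast0 c_def by (intro sum.cong refl) auto
  also have "(\<Sum>i\<in>{0+n..<k+n}. r (c i) (c (Suc i))) = (\<Sum>i\<in>{0..<k}. r (c (i+n)) (c (Suc (i+n))))"
    by (rule sum.shift_bounds_nat_ivl)
  also have "\<dots> = t"
    unfolding t(1) lessThan_atLeast0 c_def using s(3) t(2) by (intro sum.cong refl) auto
  finally have "s + t = (\<Sum>i<n + k. r (c i) (c (Suc i)))" by simp
  moreover have "c 0 = x" "c (n + k) = z" "\<forall>i\<le>n+k. c i \<in> X"
    using s t unfolding c_def by auto
  ultimately show ?thesis unfolding chain_lengths_def by blast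
qed

context
  fixes X :: "'a set" and r :: "'a \<Rightarrow> 'a \<Rightarrow> real"
  assumes nonneg: "\<And>x y. x \<in> X \<Longrightarrow> y \<in> X \<Longrightarrow> 0 \<le> r x y"
begin

lemma bdd_below_chain_lengths: "bdd_below (chain_lengths X r x y)"
  using chain_lengths_nonneg[of X r, OF nonneg] by (intro bdd_belowI) auto

lemma chain_dist_le: "x \<in> X \<Longrightarrow> y \<in> X \<Longrightarrow> chain_dist X r x y \<le> r x y"
  unfolding chain_dist_def
  by (rule cInf_lower[OF chain_lengths_single_step bdd_below_chain_lengths])

lemma chain_dist_nonneg:
  assumes "x \<in> X" "y \<in> X"
  shows "0 \<le> chain_dist X r x y"
proof -
  have "chain_lengths X r x y \<noteq> {}" using chain_lengths_single_step[OF assms] by blast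
  then show ?thesis
    unfolding chain_dist_def by (rule cInf_greatest) (rule chain_lengths_nonneg[of X r, OF nonneg])
qed

lemma chain_dist_sym:
  assumes "\<And>x y. x \<in> X \<Longrightarrow> y \<in> X \<Longrightarrow> r x y = r y x"
  shows "chain_dist X r x y = chain_dist X r y x"
proof -
  have "chain_lengths X r a b \<subseteq> chain_lengths X r b a" for a b
    by (rule subsetI) (rule chain_lengths_reverse[OF assms])
  then have "chain_lengths X r x y = chain_lengths X r y x" by (intro subset_antisym)
  then show ?thesis unfolding chain_dist_def by simp
qed

lemma chain_dist_triangle:
  assumes "x \<in> X" "y \<in> X" "z \<in> X"
  shows "chain_dist X r x z \<le> chain_dist X r x y + chain_dist X r y z"
proof -
  have nonempty: "chain_lengths X r a b \<noteq> {}" if "a \<in> X" "b \<in> X" for a b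
    using chain_lengths_single_step[OF that] by blast
  have "chain_dist X r x z - t \<le> chain_dist X r x y" if t: "t \<in> chain_lengths X r y z" for t
  proof -
    have "chain_dist X r x z - t \<le> s" if "s \<in> chain_lengths X r x y" for s
      using cInf_lower[OF chain_lengths_append[OF that t] bdd_below_chain_lengths]
      unfolding chain_dist_def by simp
    then show ?thesis
      unfolding chain_dist_def[of X r x y] by (intro cInf_greatest[OF nonempty[OF assms(1,2)]])
  qed
  then have "chain_dist X r x z - chain_dist X r x y \<le> t" if "t \<in> chain_lengths X r y z" for t
    using that by fastforce
  then have "chain_dist X r x z - chain_dist X r x y \<le> chain_dist X r y z"
    unfolding chain_dist_def[of X r y z] by (intro cInf_greatest[OF nonempty[OF assms(2,3)]])
  then show ?thesis by simp
qed

end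

theorem chain_dist_metric:
  fixes r :: "'a \<Rightarrow> 'a \<Rightarrow> real" and K :: real
  assumes nonneg: "\<And>x y. x \<in> X \<Longrightarrow> y \<in> X \<Longrightarrow> 0 \<le> r x y"
    and pos: "\<And>x y. x \<in> X \<Longrightarrow> y \<in> X \<Longrightarrow> x \<noteq> y \<Longrightarrow> 0 < r x y"
    and refl: "\<And>x. x \<in> X \<Longrightarrow> r x x = 0"
    and sym: "\<And>x y. x \<in> X \<Longrightarrow> y \<in> X \<Longrightarrow> r x y = r y x"
    and quasi: "\<And>x y z. x \<in> X \<Longrightarrow> y \<in> X \<Longrightarrow> z \<in> X \<Longrightarrow> r x z \<le> K * max (r x y) (r y z)"
    and "1 \<le> K" "K * K \<le> 2"
  shows "metric_on X (chain_dist X r)"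
    and "\<And>x y. x \<in> X \<Longrightarrow> y \<in> X \<Longrightarrow> r x y / 2 \<le> chain_dist X r x y"
proof -
  show lower: "r x y / 2 \<le> chain_dist X r x y" if "x \<in> X" "y \<in> X" for x y
  proof -
    have "r x y / 2 \<le> s" if "s \<in> chain_lengths X r x y" for s
    proof -
      obtain p n where "s = (\<Sum>i<n. r (p i) (p (Suc i)))" "p 0 = x" "p n = y" "\<forall>i\<le>n. p i \<in> X"
        using \<open>s \<in> chain_lengths X r x y\<close> unfolding chain_lengths_def by blast
      then show ?thesis
        using quasi_ultrametric_chain_bound[where X = X and r = r and K = K and n = n and p = p,
            OF nonneg refl quasi \<open>1 \<le> K\<close> \<open>K * K \<le> 2\<close>]
        by simp
    qed
    then show ?thesis unfolding chain_dist_def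
      using chain_lengths_single_step[OF that] by (intro cInf_greatest) blast+
  qed
  have zero: "chain_dist X r x y = 0 \<longleftrightarrow> x = y" if "x \<in> X" "y \<in> X" for x y
  proof
    assume "chain_dist X r x y = 0"
    then show "x = y" using lower[OF that] pos[OF that] by fastforce
  next
    assume "x = y"
    then show "chain_dist X r x y = 0"
      using chain_dist_le[of X r, OF nonneg that] chain_dist_nonneg[of X r, OF nonneg that] refl that
      by simp
  qed
  show "metric_on X (chain_dist X r)"
    unfolding metric_on_def
    using chain_dist_nonneg[of X r, OF nonneg] zero chain_dist_sym[of X r, OF nonneg sym]
      chain_dist_triangle[of X r, OF nonneg] by blast
qed

lemma epow_nonneg: "0 < \<alpha> \<Longrightarrow> 0 \<le> epow \<alpha> e"
  by (cases e) (auto simp: epow_def)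

lemma epow_eq_0_iff: "0 < \<alpha> \<Longrightarrow> e \<noteq> -\<infinity> \<Longrightarrow> epow \<alpha> e = 0 \<longleftrightarrow> e = \<infinity>"
  by (cases e) (auto simp: epow_def)

lemma epow_antimono:
  assumes "0 < \<alpha>" "\<alpha> < 1" "a \<noteq> -\<infinity>" "a \<le> b"
  shows "epow \<alpha> b \<le> epow \<alpha> a"
  using assms by (cases a; cases b) (auto simp: epow_def intro: powr_mono')

lemma epow_min:
  assumes "0 < \<alpha>" "\<alpha> < 1" "a \<noteq> -\<infinity>" "b \<noteq> -\<infinity>"
  shows "epow \<alpha> (min a b) = max (epow \<alpha> a) (epow \<alpha> b)"
  using epow_antimono[OF assms(1,2,3), of b] epow_antimono[OF assms(1,2,4), of a]
  by (cases "a \<le> b") (auto simp: min_def max_def)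

lemma epow_minus:
  assumes "0 < \<alpha>" "e \<noteq> -\<infinity>"
  shows "epow \<alpha> (e - ereal \<delta>) = \<alpha> powr (- \<delta>) * epow \<alpha> e"
  using assms by (cases e) (auto simp: epow_def powr_add[symmetric])

lemma epow_quasi_ultrametric:
  assumes "0 < \<alpha>" "\<alpha> < 1" "a \<noteq> -\<infinity>" "b \<noteq> -\<infinity>" "min a b - ereal \<delta> \<le> c"
  shows "epow \<alpha> c \<le> \<alpha> powr (- \<delta>) * max (epow \<alpha> a) (epow \<alpha> b)"
proof -
  have "min a b \<noteq> -\<infinity>" using assms(3,4) by (simp add: min_def)
  then have "min a b - ereal \<delta> \<noteq> -\<infinity>" by (cases "min a b") auto
  then have "epow \<alpha> c \<le> epow \<alpha> (min a b - ereal \<delta>)"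
    using assms by (intro epow_antimono) auto
  also have "\<dots> = \<alpha> powr (- \<delta>) * max (epow \<alpha> a) (epow \<alpha> b)"
    using \<open>min a b \<noteq> -\<infinity>\<close> assms by (simp add: epow_minus epow_min)
  finally show ?thesis .
qed

text \<open>The base \<alpha> = 2^(-1 / (2\<delta> + 2)) is chosen so that K = \<alpha>^(-\<delta>) = 2^(\<delta> / (2\<delta> + 2)).\<close>

lemma quasi_ultrametric_constant_bounds:
  fixes \<delta> :: real
  assumes "0 \<le> \<delta>"
  defines "K \<equiv> (2 powr (- 1 / (2 * \<delta> + 2))) powr (- \<delta>)"
  shows "1 \<le> K" "K * K \<le> 2"
proof -
  have K_eq: "K = 2 powr (\<delta> / (2 * \<delta> + 2))"
    unfolding K_def powr_powr by (simp add: field_simps)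
  then show "1 \<le> K" using assms(1) by (auto intro: ge_one_powr_ge_zero)
  have "\<delta> / (2 * \<delta> + 2) + \<delta> / (2 * \<delta> + 2) = \<delta> / (\<delta> + 1)"
    using assms(1) by (simp add: divide_simps add_pos_nonneg)
  then have "K * K = 2 powr (\<delta> / (\<delta> + 1))"
    unfolding K_eq powr_add[symmetric] by simp
  also have "\<dots> \<le> 2 powr 1" using assms(1) by (intro powr_mono) auto
  finally show "K * K \<le> 2" by simp
qed

theorem log_scale_has_associated_metric:
  assumes "log_scale X l"
  shows "\<exists>d. metric_on X d \<and> associated X d l"
proof -
  obtain \<delta> :: real where "0 \<le> \<delta>"
    and ineq: "\<forall>x\<in>X. \<forall>y\<in>X. \<forall>z\<in>X. min (l x y) (l y z) - ereal \<delta> \<le> l x z"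
    using assms unfolding log_scale_def by (elim conjE exE) blast
  have finite_below: "l x y \<noteq> -\<infinity>" and sym: "l x y = l y x" and diag: "l x y = \<infinity> \<longleftrightarrow> x = y"
    if "x \<in> X" "y \<in> X" for x y
    using assms that unfolding log_scale_def by simp_all
  define \<alpha> :: real where "\<alpha> = 2 powr (- 1 / (2 * \<delta> + 2))"
  define K where "K = \<alpha> powr (- \<delta>)"
  have "0 < \<alpha>" "\<alpha> < 1" unfolding \<alpha>_def using \<open>0 \<le> \<delta>\<close> by (auto intro: powr_less_one)
  have "1 \<le> K" "K * K \<le> 2"
    unfolding K_def \<alpha>_def using quasi_ultrametric_constant_bounds[OF \<open>0 \<le> \<delta>\<close>] by simp_all
  define r where "r x y = epow \<alpha> (l x y)" for x y
  have r_quasi: "r x z \<le> K * max (r x y) (r y z)" if "x \<in> X" "y \<in> X" "z \<in> X" for x y z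
    unfolding r_def K_def
    using that \<open>0 < \<alpha>\<close> \<open>\<alpha> < 1\<close> finite_below ineq by (intro epow_quasi_ultrametric) auto
  have r_nonneg: "0 \<le> r x y" for x y unfolding r_def using \<open>0 < \<alpha>\<close> by (rule epow_nonneg)
  have r_pos: "0 < r x y" if "x \<in> X" "y \<in> X" "x \<noteq> y" for x y
    using r_nonneg[of x y] epow_eq_0_iff[OF \<open>0 < \<alpha>\<close> finite_below] diag that
    unfolding r_def by fastforce
  have r_refl: "r x x = 0" if "x \<in> X" for x
    using diag[OF that that] unfolding r_def epow_def by simp
  have r_sym: "r x y = r y x" if "x \<in> X" "y \<in> X" for x y
    using sym[OF that] unfolding r_def by simp
  have chain_metric: "metric_on X (chain_dist X r)"
    and chain_lower: "\<And>x y. x \<in> X \<Longrightarrow> y \<in> X \<Longrightarrow> r x y / 2 \<le> chain_dist X r x y"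
    by (rule chain_dist_metric[where K = K];
        use r_nonneg r_pos r_refl r_sym r_quasi \<open>1 \<le> K\<close> \<open>K * K \<le> 2\<close> in blast)+
  have "epow \<alpha> (l x y) / 2 \<le> chain_dist X r x y \<and> chain_dist X r x y \<le> 2 * epow \<alpha> (l x y)"
    if "x \<in> X" "y \<in> X" for x y
    using chain_lower[OF that] chain_dist_le[of X r, OF r_nonneg that] r_nonneg[of x y]
    unfolding r_def by auto
  then have "associated X (chain_dist X r) l"
    unfolding associated_def using \<open>0 < \<alpha>\<close> \<open>\<alpha> < 1\<close> by (intro exI[of _ \<alpha>] exI[of _ 2]) auto
  then show ?thesis using chain_metric by blast
qed

lemma metric_onD:
  assumes "metric_on X d" "x \<in> X" "y \<in> X"
  shows "0 \<le> d x y" "d x y = 0 \<longleftrightarrow> x = y" "d x y = d y x"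
  using assms unfolding metric_on_def by simp_all

lemma metric_on_triangle:
  "metric_on X d \<Longrightarrow> x \<in> X \<Longrightarrow> y \<in> X \<Longrightarrow> z \<in> X \<Longrightarrow> d x z \<le> d x y + d y z"
  unfolding metric_on_def by simp

lemma metric_on_pos: "metric_on X d \<Longrightarrow> x \<in> X \<Longrightarrow> y \<in> X \<Longrightarrow> x \<noteq> y \<Longrightarrow> 0 < d x y"
  using metric_onD(1,2)[of X d x y] by (simp add: order_less_le)

lemma floor_ln_le_max_plus_one:
  fixes a b c :: real
  assumes "0 < a" "0 < b" "0 < c" "c \<le> a + b"
  shows "\<lfloor>ln c\<rfloor> \<le> max \<lfloor>ln a\<rfloor> \<lfloor>ln b\<rfloor> + 1"
proof -
  have "ln c \<le> ln (2 * max a b)" using assms by (subst ln_le_cancel_iff) auto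
  also have "\<dots> = ln 2 + max (ln a) (ln b)" using assms by (simp add: ln_mult max_def)
  also have "ln (2::real) \<le> 1" using ln_le_minus_one[of 2] by simp
  finally have "\<lfloor>ln c\<rfloor> \<le> \<lfloor>max (ln a) (ln b) + 1\<rfloor>" by (intro floor_mono) simp
  moreover have "\<lfloor>max (ln a) (ln b)\<rfloor> = max \<lfloor>ln a\<rfloor> \<lfloor>ln b\<rfloor>"
    by (rule max_of_mono[symmetric]) (simp add: mono_def floor_mono)
  ultimately show ?thesis by simp
qed

definition floor_log_scale :: "('a \<Rightarrow> 'a \<Rightarrow> real) \<Rightarrow> 'a \<Rightarrow> 'a \<Rightarrow> ereal" where
  "floor_log_scale d x y = (if x = y then \<infinity> else ereal (- of_int \<lfloor>ln (d x y)\<rfloor>))"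

lemma log_scale_floor_log_scale:
  assumes "metric_on X d"
  shows "log_scale X (floor_log_scale d)"
proof -
  let ?l = "floor_log_scale d"
  have "min (?l x y) (?l y z) - ereal 1 \<le> ?l x z" if "x \<in> X" "y \<in> X" "z \<in> X" for x y z
  proof (cases "x = y \<or> y = z \<or> x = z")
    case True
    have "min (?l x y) (?l y z) - ereal 1 \<le> min (?l x y) (?l y z)"
      by (rule ereal_diff_le_self) simp
    with True show ?thesis by (auto simp: floor_log_scale_def)
  next
    case False
    have "\<lfloor>ln (d x z)\<rfloor> \<le> max \<lfloor>ln (d x y)\<rfloor> \<lfloor>ln (d y z)\<rfloor> + 1"
      using metric_on_pos[OF assms] metric_on_triangle[OF assms that] that False
      by (intro floor_ln_le_max_plus_one) auto
    then show ?thesis using False by (auto simp: floor_log_scale_def min_def max_def)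
  qed
  moreover have "?l x y = ?l y x" if "x \<in> X" "y \<in> X" for x y
    using metric_onD(3)[OF assms that] unfolding floor_log_scale_def by simp
  ultimately show ?thesis
    unfolding log_scale_def by (intro conjI exI[of _ 1]) (auto simp: floor_log_scale_def)
qed

lemma associated_floor_log_scale:
  assumes "metric_on X d"
  shows "associated X d (floor_log_scale d)"
proof -
  define \<alpha> :: real where "\<alpha> = exp (- 1)"
  have "epow \<alpha> (floor_log_scale d x y) / 3 \<le> d x y \<and> d x y \<le> 3 * epow \<alpha> (floor_log_scale d x y)"
    if "x \<in> X" "y \<in> X" for x y
  proof (cases "x = y")
    case True
    then show ?thesis using metric_onD(2)[OF assms that] by (simp add: floor_log_scale_def epow_def)
  next
    case False
    define t where "t = ln (d x y)"
    have "0 < d x y" using metric_on_pos[OF assms that False] .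
    then have "d x y = exp t" unfolding t_def by simp
    moreover have "epow \<alpha> (floor_log_scale d x y) = exp \<lfloor>t\<rfloor>"
      using False unfolding epow_def \<alpha>_def t_def floor_log_scale_def by (simp add: powr_def)
    moreover have "exp t \<le> exp (\<lfloor>t\<rfloor> + 1)" by simp
    moreover have "exp (\<lfloor>t\<rfloor> + 1) \<le> 3 * exp \<lfloor>t\<rfloor>"
      using exp_le by (simp add: exp_add mult.commute)
    moreover have "exp \<lfloor>t\<rfloor> \<le> exp t" "0 < exp \<lfloor>t\<rfloor>" by simp_all
    ultimately show ?thesis by linarith
  qed
  then show ?thesis
    unfolding associated_def \<alpha>_def by (intro exI[of _ "exp (- 1)"] exI[of _ 3]) auto
qed

theorem proposition1p1p3:
  fixes X :: "'a set"
  shows "(\<forall>l. log_scale X l \<longrightarrow> (\<exists>d. metric_on X d \<and> associated X d l)) \<and>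
         (\<forall>d. metric_on X d \<longrightarrow>
            (let l = (\<lambda>x y. if x = y then \<infinity> else ereal (- of_int \<lfloor>ln (d x y)\<rfloor>))
             in log_scale X l \<and> associated X d l))"
proof -
  have floor_log_scale_eq:
    "(\<lambda>x y. if x = y then \<infinity> else ereal (- of_int \<lfloor>ln (d x y)\<rfloor>)) = floor_log_scale d"
    for d :: "'a \<Rightarrow> 'a \<Rightarrow> real"
    by (intro ext) (simp add: floor_log_scale_def)
  show ?thesis
    unfolding Let_def floor_log_scale_eq
    using log_scale_has_associated_metric log_scale_floor_log_scale associated_floor_log_scale
    by blast
qed

end
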